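(* Let $k$ be a positive integer and $n\ge 4$. Then the perfect number $N_{(n,2)}$ equals $k^2-k$ if $n=2k$, and equals $k^2$ if $n=2k+1$.
   Context: Let $S=K[x_1,\ldots,x_n]$ over a field $K$, and $sm(S)_d$ the set of square-free monomials of degree $d$. For a set $A$ of square-free monomials, $\sqcup(A)=\{gx_i\mid g\in A,\ x_i\nmid g\}$ and $\sqcap(A)=\{h\ne 1\mid h=g/x_i \text{ for some } g\in A,\ x_i\mid g\}$. A set $A\subseteq sm(S)_d$ is $(n,d)^{th}$ perfect if $\sqcup(A)=sm(S)_{d+1}$ and $\sqcap(A)=sm(S)_{d-1}$. The perfect number $N_{(n,d)}$ is the least cardinality of an $(n,d)^{th}$ perfect set. *)

theory Defs
  imports Main
begin

text \<open>A square-free monomial in x_1,...,x_n is identified with its support,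
  a subset of {1..n}; its degree is the cardinality of the support.
  The monomial 1 corresponds to the empty set.\<close>

definition sm :: "nat \<Rightarrow> nat \<Rightarrow> nat set set" where
  "sm n d = {g. g \<subseteq> {1..n} \<and> card g = d}"

text \<open>Upper shadow: multiply by a variable x_i (i in {1..n}) not dividing g.\<close>
definition sqcup :: "nat \<Rightarrow> nat set set \<Rightarrow> nat set set" where
  "sqcup n A = {insert i g | g i. g \<in> A \<and> i \<in> {1..n} \<and> i \<notin> g}"

text \<open>Lower shadow: divide by a variable x_i dividing g, excluding the monomial 1.\<close>
definition sqcap :: "nat set set \<Rightarrow> nat set set" where
  "sqcap A = {g - {i} | g i. g \<in> A \<and> i \<in> g \<and> g - {i} \<noteq> {}}"

definition perfect :: "nat \<Rightarrow> nat \<Rightarrow> nat set set \<Rightarrow> bool" where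
  "perfect n d A \<longleftrightarrow> A \<subseteq> sm n d \<and> sqcup n A = sm n (d + 1) \<and> sqcap A = sm n (d - 1)"

definition perfect_number :: "nat \<Rightarrow> nat \<Rightarrow> nat" where
  "perfect_number n d = (LEAST m. \<exists>A. perfect n d A \<and> card A = m)"

end

theory Submission imports Defs begin

text \<open>Identify a set of square-free quadratic monomials with a graph on \(\{1..n\}\). It is
  perfect iff it has no isolated vertex and every triple of vertices spans an edge, i.e. its
  complement is triangle-free. If \(uv\) is a non-edge, each of the other \(n-2\) vertices \(w\)
  needs its own edge inside \(\{u,v,w\}\) through \(w\); deleting \(u, v\) and inducting gives
  Mantel's bound \(n^2 \le 4|A| + 2n\). Two disjoint cliques of sizes \(\lfloor n/2\rfloor\)
  and \(\lceil n/2\rceil\) attain it.\<close>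

definition pairs :: "'a set \<Rightarrow> 'a set set" where
  "pairs S = {e. e \<subseteq> S \<and> card e = 2}"

lemma sm_2_eq_pairs: "sm n 2 = pairs {1..n}"
  by (simp add: sm_def pairs_def)

lemma finite_pairs: "finite S \<Longrightarrow> finite (pairs S)"
  by (simp add: pairs_def)

lemma card_pairs: "finite S \<Longrightarrow> card (pairs S) = card S choose 2"
  by (simp add: pairs_def n_subsets)

lemma double_choose_two: "2 * (n choose 2) + n = n * (n :: nat)"
  by (cases n) (auto simp: choose_two)

lemma hitting_pairs_edge_through:
  assumes "A \<subseteq> pairs V"
    and hit: "\<And>T. T \<subseteq> V \<Longrightarrow> card T = 3 \<Longrightarrow> \<exists>e\<in>A. e \<subseteq> T"
    and "u \<in> V" "v \<in> V" "u \<noteq> v" "{u, v} \<notin> A" "w \<in> V - {u, v}"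
  shows "\<exists>e. e \<in> A \<and> w \<in> e \<and> e \<subseteq> {u, v, w}"
proof -
  obtain e where e: "e \<in> A" "e \<subseteq> {u, v, w}"
    using hit[of "{u, v, w}"] assms(3-5,7) by auto
  have "w \<in> e"
  proof (rule ccontr)
    assume "w \<notin> e"
    moreover have "card e = 2" using e(1) assms(1) by (auto simp: pairs_def)
    ultimately have "e = {u, v}"
      using e(2) assms(5) by (intro card_subset_eq) auto
    with e(1) assms(6) show False by simp
  qed
  with e show ?thesis by blast
qed

lemma card_hitting_pairs_remove_non_edge:
  assumes "A \<subseteq> pairs V"
    and "\<And>T. T \<subseteq> V \<Longrightarrow> card T = 3 \<Longrightarrow> \<exists>e\<in>A. e \<subseteq> T"
    and "finite V" "u \<in> V" "v \<in> V" "u \<noteq> v" "{u, v} \<notin> A"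
  shows "card (V - {u, v}) + card {e \<in> A. e \<subseteq> V - {u, v}} \<le> card A"
proof -
  let ?W = "V - {u, v}"
  let ?A' = "{e \<in> A. e \<subseteq> ?W}"
  have finA: "finite A"
    using assms(1,3) finite_pairs finite_subset by blast
  have card_edge: "e \<in> A \<Longrightarrow> card e = 2" for e
    using assms(1) by (auto simp: pairs_def)
  have "\<forall>w\<in>?W. \<exists>e. e \<in> A \<and> w \<in> e \<and> e \<subseteq> {u, v, w}"
    using hitting_pairs_edge_through[OF assms(1,2,4-7)] by blast
  then obtain g where g: "\<forall>w\<in>?W. g w \<in> A \<and> w \<in> g w \<and> g w \<subseteq> {u, v, w}"
    by (rule bchoice[elim_format]) blast
  have inj: "inj_on g ?W"
    by (rule inj_onI) (use g in blast)
  have "g w \<in> A - ?A'" if w: "w \<in> ?W" for w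
  proof -
    have "\<not> g w \<subseteq> ?W"
    proof
      assume "g w \<subseteq> ?W"
      then have "g w \<subseteq> {w}" using g w by blast
      then have "card (g w) \<le> 1" using card_mono[of "{w}" "g w"] by simp
      with card_edge g w show False by fastforce
    qed
    with g w show ?thesis by blast
  qed
  then have "card ?W \<le> card (A - ?A')"
    using card_inj_on_le[OF inj] finA by blast
  moreover have "card A = card ?A' + card (A - ?A')"
    using card_Diff_subset[of ?A' A] card_mono[of A ?A'] finite_subset[of ?A' A] finA by fastforce
  ultimately show ?thesis by simp
qed

lemma card_hitting_pairs_lower_bound:
  assumes "finite V" "A \<subseteq> pairs V"
    and "\<And>T. T \<subseteq> V \<Longrightarrow> card T = 3 \<Longrightarrow> \<exists>e\<in>A. e \<subseteq> T"
  shows "card V ^ 2 \<le> 4 * card A + 2 * card V"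
  using assms
proof (induction "card V" arbitrary: V A rule: less_induct)
  case less
  show ?case
  proof (cases "pairs V \<subseteq> A")
    case True
    then have "A = pairs V"
      using less.prems(2) by blast
    then have "card A = card V choose 2"
      using less.prems(1) by (simp add: card_pairs)
    with double_choose_two[of "card V"] show ?thesis
      by (simp add: power2_eq_square)
  next
    case False
    then obtain u v where uv: "u \<in> V" "v \<in> V" "u \<noteq> v" "{u, v} \<notin> A"
      using less.prems(2) by (auto simp: pairs_def card_2_iff)
    let ?W = "V - {u, v}"
    let ?A' = "{e \<in> A. e \<subseteq> ?W}"
    have "card {u, v} \<le> card V"
      using uv less.prems(1) by (intro card_mono) auto
    then have cardV: "card V = card ?W + 2"
      using uv less.prems(1) by (simp add: card_Diff_subset)
    have "card ?W ^ 2 \<le> 4 * card ?A' + 2 * card ?W"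
    proof (rule less.hyps)
      fix T assume T: "T \<subseteq> ?W" "card T = 3"
      then obtain e where "e \<in> A" "e \<subseteq> T" using less.prems(3) by blast
      with T show "\<exists>e\<in>?A'. e \<subseteq> T" by blast
    qed (use less.prems in \<open>auto simp: cardV pairs_def\<close>)
    moreover have "card ?W + card ?A' \<le> card A"
      using card_hitting_pairs_remove_non_edge[OF less.prems(2,3,1) uv] .
    ultimately show ?thesis
      unfolding cardV by (simp add: power2_eq_square algebra_simps)
  qed
qed

lemma sqcup_eq_sm_3_iff:
  assumes "A \<subseteq> sm n 2"
  shows "sqcup n A = sm n 3 \<longleftrightarrow> (\<forall>T\<in>sm n 3. \<exists>e\<in>A. e \<subseteq> T)"
proof -
  have "sqcup n A \<subseteq> sm n 3"
  proof
    fix x assume "x \<in> sqcup n A"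
    then obtain g i where "x = insert i g" "g \<in> sm n 2" "i \<in> {1..n}" "i \<notin> g"
      using assms unfolding sqcup_def by blast
    then show "x \<in> sm n 3"
      by (auto simp: sm_def card_insert_if card_ge_0_finite)
  qed
  moreover have "T \<in> sqcup n A \<longleftrightarrow> (\<exists>e\<in>A. e \<subseteq> T)" if T: "T \<in> sm n 3" for T
  proof
    assume "\<exists>e\<in>A. e \<subseteq> T"
    then obtain e where e: "e \<in> A" "e \<subseteq> T" by blast
    have "card e = 2" "finite T" using e(1) T assms by (auto simp: sm_def card_ge_0_finite)
    then have "card (T - e) = 1" using T e(2) by (simp add: sm_def card_Diff_subset finite_subset)
    then obtain i where "T - e = {i}" by (rule card_1_singletonE)
    then have "T = insert i e" "i \<notin> e" "i \<in> {1..n}" using e(2) T by (auto simp: sm_def)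
    with e(1) show "T \<in> sqcup n A" unfolding sqcup_def by blast
  qed (auto simp: sqcup_def)
  ultimately show ?thesis by blast
qed

lemma sm_1_eq_singletons: "sm n 1 = (\<lambda>i. {i}) ` {1..n}"
  by (auto simp: sm_def card_1_singleton_iff)

lemma sqcap_eq_sm_1_iff:
  assumes "A \<subseteq> sm n 2"
  shows "sqcap A = sm n 1 \<longleftrightarrow> (\<forall>i\<in>{1..n}. \<exists>e\<in>A. i \<in> e)"
proof -
  have pair: "\<exists>j. e = {i, j} \<and> i \<noteq> j" if "e \<in> A" "i \<in> e" for e i
    using that assms by (auto simp: sm_def card_2_iff)
  have "sqcap A \<subseteq> sm n 1"
  proof
    fix x assume "x \<in> sqcap A"
    then obtain e i where x: "x = e - {i}" "e \<in> A" "i \<in> e"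
      unfolding sqcap_def by blast
    then obtain j where "e = {i, j}" "i \<noteq> j" using pair by blast
    moreover have "e \<subseteq> {1..n}" using x(2) assms by (auto simp: sm_def)
    ultimately show "x \<in> sm n 1" using x(1) by (auto simp: sm_def)
  qed
  then have "sqcap A = sm n 1 \<longleftrightarrow> (\<forall>i\<in>{1..n}. {i} \<in> sqcap A)"
    unfolding sm_1_eq_singletons by blast
  also have "\<dots> \<longleftrightarrow> (\<forall>i\<in>{1..n}. \<exists>e\<in>A. i \<in> e)"
  proof (intro ball_cong refl iffI)
    fix i assume "\<exists>e\<in>A. i \<in> e"
    then obtain e j where "e \<in> A" "e = {i, j}" "i \<noteq> j" using pair by blast
    then show "{i} \<in> sqcap A"
      unfolding sqcap_def by (intro CollectI exI[of _ e] exI[of _ j]) auto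
  qed (auto simp: sqcap_def)
  finally show ?thesis .
qed

lemma perfect_2_iff:
  "perfect n 2 A \<longleftrightarrow> A \<subseteq> sm n 2
     \<and> (\<forall>T\<in>sm n 3. \<exists>e\<in>A. e \<subseteq> T) \<and> (\<forall>i\<in>{1..n}. \<exists>e\<in>A. i \<in> e)"
  using sqcup_eq_sm_3_iff[of A n] sqcap_eq_sm_1_iff[of A n]
  unfolding perfect_def by auto

lemma perfect_2_card_lower_bound:
  assumes "perfect n 2 A"
  shows "n ^ 2 \<le> 4 * card A + 2 * n"
proof -
  have "A \<subseteq> pairs {1..n}" "\<And>T. T \<subseteq> {1..n} \<Longrightarrow> card T = 3 \<Longrightarrow> \<exists>e\<in>A. e \<subseteq> T"
    using assms unfolding perfect_2_iff sm_2_eq_pairs by (auto simp: sm_def)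
  then show ?thesis
    using card_hitting_pairs_lower_bound[of "{1..n}" A] by simp
qed

lemma perfect_2_two_cliques:
  assumes "V1 \<inter> V2 = {}" "V1 \<union> V2 = {1..n}" "card V1 \<ge> 2" "card V2 \<ge> 2"
  shows "perfect n 2 (pairs V1 \<union> pairs V2)"
  unfolding perfect_2_iff
proof (intro conjI ballI)
  show "pairs V1 \<union> pairs V2 \<subseteq> sm n 2"
    using assms(2) by (auto simp: pairs_def sm_def)
next
  fix T assume "T \<in> sm n 3"
  then have T: "T \<subseteq> {1..n}" "card T = 3" by (simp_all add: sm_def)
  have fin: "finite T" using T(2) by (intro card_ge_0_finite) simp
  have "card T = card ((T \<inter> V1) \<union> (T \<inter> V2))"
    using T(1) assms(2) by (intro arg_cong[where f = card]) blast
  also have "\<dots> = card (T \<inter> V1) + card (T \<inter> V2)"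
    using fin assms(1) by (intro card_Un_disjoint) auto
  finally have "2 \<le> card (T \<inter> V1) \<or> 2 \<le> card (T \<inter> V2)"
    using T(2) by linarith
  then obtain S where S: "S = V1 \<or> S = V2" "2 \<le> card (T \<inter> S)" by blast
  obtain e where "e \<subseteq> T \<inter> S" "card e = 2"
    using obtain_subset_with_card_n[OF S(2)] by blast
  with S(1) show "\<exists>e\<in>pairs V1 \<union> pairs V2. e \<subseteq> T"
    by (auto simp: pairs_def)
next
  fix i assume "i \<in> {1..n}"
  then obtain S where S: "S = V1 \<or> S = V2" "i \<in> S" using assms(2) by blast
  have "S \<noteq> {i}" using S(1) assms(3,4) by auto
  then obtain j where "j \<in> S" "j \<noteq> i" using S(2) by blast
  with S show "\<exists>e\<in>pairs V1 \<union> pairs V2. i \<in> e"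
    by (intro bexI[of _ "{i, j}"]) (auto simp: pairs_def)
qed

lemma card_two_cliques:
  assumes "V1 \<inter> V2 = {}" "finite V1" "finite V2"
  shows "card (pairs V1 \<union> pairs V2) = (card V1 choose 2) + (card V2 choose 2)"
proof -
  have "pairs V1 \<inter> pairs V2 = {}"
  proof (rule ccontr)
    assume "pairs V1 \<inter> pairs V2 \<noteq> {}"
    then obtain e where "e \<subseteq> V1 \<inter> V2" "card e = 2" by (auto simp: pairs_def)
    with assms(1) show False by simp
  qed
  then have "card (pairs V1 \<union> pairs V2) = card (pairs V1) + card (pairs V2)"
    using assms(2,3) by (intro card_Un_disjoint finite_pairs)
  with assms(2,3) show ?thesis
    by (simp add: card_pairs)
qed

lemma perfect_number_eqI:
  assumes "perfect n d A" "card A = m" "\<And>B. perfect n d B \<Longrightarrow> m \<le> card B"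
  shows "perfect_number n d = m"
  unfolding perfect_number_def using assms by (intro Least_equality) blast+

text \<open>Since \(4 (\binom{a}{2} + \binom{b}{2}) = n^2 - 2n + (a-b)^2 \le n^2 - 2n + 1\) for
  \(n = a + b\), the integer bound \(n^2 \le 4|B| + 2n\) already forces
  \(|B| \ge \binom{a}{2} + \binom{b}{2}\).\<close>

lemma perfect_number_2_balanced:
  assumes "2 \<le> a" "b = a \<or> b = a + 1" "n = a + b"
  shows "perfect_number n 2 = (a choose 2) + (b choose 2)"
proof (rule perfect_number_eqI)
  let ?V1 = "{1..a}" and ?V2 = "{a+1..n}"
  have split: "?V1 \<inter> ?V2 = {}" "?V1 \<union> ?V2 = {1..n}" and cards: "card ?V1 = a" "card ?V2 = b"
    using assms by auto
  show "perfect n 2 (pairs ?V1 \<union> pairs ?V2)"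
    using perfect_2_two_cliques[OF split] cards assms by auto
  show "card (pairs ?V1 \<union> pairs ?V2) = (a choose 2) + (b choose 2)"
    using card_two_cliques[OF split(1)] cards by simp
next
  fix B assume "perfect n 2 B"
  then have "n ^ 2 \<le> 4 * card B + 2 * n" by (rule perfect_2_card_lower_bound)
  moreover have "2 * (a choose 2) + a = a * a" "2 * (b choose 2) + b = b * b"
    by (rule double_choose_two)+
  ultimately show "(a choose 2) + (b choose 2) \<le> card B"
    using assms(2,3) by (auto simp: power2_eq_square algebra_simps)
qed

theorem theorem3p1:
  fixes k n :: nat
  assumes "k > 0" and "n \<ge> 4"
  shows "(n = 2 * k \<longrightarrow> perfect_number n 2 = k ^ 2 - k)
       \<and> (n = 2 * k + 1 \<longrightarrow> perfect_number n 2 = k ^ 2)"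
proof -
  have choose_k: "2 * (k choose 2) + k = k * k" "2 * (Suc k choose 2) + Suc k = Suc k * Suc k"
    by (rule double_choose_two)+
  show ?thesis
  proof (intro conjI impI)
    assume "n = 2 * k"
    then have "perfect_number n 2 = (k choose 2) + (k choose 2)"
      using assms by (intro perfect_number_2_balanced) auto
    with choose_k show "perfect_number n 2 = k ^ 2 - k"
      by (simp add: power2_eq_square)
  next
    assume "n = 2 * k + 1"
    then have "perfect_number n 2 = (k choose 2) + (Suc k choose 2)"
      using assms by (intro perfect_number_2_balanced) auto
    with choose_k show "perfect_number n 2 = k ^ 2"
      by (simp add: power2_eq_square)
  qed
qed

end
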